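(* There exist dimensions $D_1,D_2\ge1$, data points, a bandwidth $\sigma>0$, a query index $i$, candidate sets $S_1(i),S_2(i)$ and $S(i)=S_1(i)\cup S_2(i)$, and indices $j\ne k$ in $S(i)$ with the following properties: - $k\notin\mathcal{N}_1(i)$ and $k\notin\mathcal{N}_2(i)$; - $j$ eliminates $k$ in channel 1 but not in channel 2, i.e., $K^{(1)}_{ik}<K^{(1)}_{ij}K^{(1)}_{jk}$ and $K^{(2)}_{ik}>K^{(2)}_{ij}K^{(2)}_{jk}$; - nevertheless, $k\in\mathcal{N}(i)$. In other words, a point that is not an NNK neighbor of $x_i$ in any channel, but is not eliminated by the same point in all channels, can be an NNK neighbor in the aggregate space.
   Context: Data and channels: $x_1,\dots,x_N\in\mathbb{R}^{D}$, each written as $x_a=\begin{bmatrix}x_a^{(1)}\\ x_a^{(2)}\end{bmatrix}$ with $x_a^{(1)}\in\mathbb{R}^{D_1}$, $x_a^{(2)}\in\mathbb{R}^{D_2}$, $D_1+D_2=D$. Kernel values: - Channel kernel: for $c=1,2$, $K^{(c)}_{ab}=\exp\!\big(-\|x_a^{(c)}-x_b^{(c)}\|^2/(2\sigma^2)\big)$. - Aggregate kernel: $K_{ab}=\exp\!\big(-\|x_a-x_b\|^2/(2\sigma^2)\big)=K^{(1)}_{ab}K^{(2)}_{ab}$. $K$-nearest-neighbor candidate set: for channel $c$, $S_c(i)\subseteq\{1,\dots,N\}\setminus\{i\}$ with $|S_c(i)|=K$ and $\|x_i^{(c)}-x_l^{(c)}\|\le\|x_i^{(c)}-x_m^{(c)}\|$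 for all $l\in S_c(i)$ and all $m\notin S_c(i)\cup\{i\}$. NNK neighborhood: given a query $i$, a candidate set $S$ and kernel values $(K_{ab})$, it is $$\{\,j\in S:\ K_{ij}>K_{ik}K_{jk}\ \text{for every }k\in S\setminus\{j\}\,\}.$$ A candidate $k$ is eliminated by $j$ when $K_{ik}<K_{ij}K_{jk}$. This is the kernel-ratio-interval criterion, equivalent to $\theta_k=0$ in the two-candidate non-negative kernel regression problem over $\{j,k\}$. Notation: - $\mathcal{N}_c(i)$ is the NNK neighborhood computed with $S_c(i)$ and $K^{(c)}$. - $\mathcal{N}(i)$ is the NNK neighborhood computed with $S(i)$ and $K$. *)

theory Defs
  imports Complex_Main
begin

text \<open>Vectors in R^D are represented as functions nat => real, only coordinates t < D matter.\<close>

definition sqdist :: "nat \<Rightarrow> (nat \<Rightarrow> real) \<Rightarrow> (nat \<Rightarrow> real) \<Rightarrow> real" where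
  "sqdist D u v = (\<Sum>t<D. (u t - v t)^2)"

definition edist :: "nat \<Rightarrow> (nat \<Rightarrow> real) \<Rightarrow> (nat \<Rightarrow> real) \<Rightarrow> real" where
  "edist D u v = sqrt (sqdist D u v)"

definition gkernel :: "real \<Rightarrow> nat \<Rightarrow> (nat \<Rightarrow> nat \<Rightarrow> real) \<Rightarrow> nat \<Rightarrow> nat \<Rightarrow> real" where
  "gkernel \<sigma> D x a b = exp (- ((edist D (x a) (x b))^2) / (2 * \<sigma>^2))"

definition concat_data :: "nat \<Rightarrow> (nat \<Rightarrow> nat \<Rightarrow> real) \<Rightarrow> (nat \<Rightarrow> nat \<Rightarrow> real) \<Rightarrow> nat \<Rightarrow> nat \<Rightarrow> real" where
  "concat_data D1 x1 x2 a t = (if t < D1 then x1 a t else x2 a (t - D1))"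

definition knn_cand :: "nat \<Rightarrow> nat \<Rightarrow> (nat \<Rightarrow> nat \<Rightarrow> real) \<Rightarrow> nat \<Rightarrow> nat \<Rightarrow> nat set \<Rightarrow> bool" where
  "knn_cand N D x K i S \<longleftrightarrow>
     S \<subseteq> {..<N} - {i} \<and> card S = K \<and>
     (\<forall>l\<in>S. \<forall>m\<in>{..<N} - (S \<union> {i}). edist D (x i) (x l) \<le> edist D (x i) (x m))"

definition nnk :: "(nat \<Rightarrow> nat \<Rightarrow> real) \<Rightarrow> nat \<Rightarrow> nat set \<Rightarrow> nat set" where
  "nnk Kv i S = {j\<in>S. \<forall>k\<in>S - {j}. Kv i j > Kv i k * Kv j k}"

end

theory Submission
  imports Defs
begin

(* With the Gaussian kernel, j eliminates k for the query i exactly when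
   d(i,j)^2 + d(j,k)^2 < d(i,k)^2, i.e. when the angle at x_j of the triangle x_i x_j x_k
   is obtuse, and squared distances add up over the channels.  Four points suffice:
   on the line of channel 1 at 0, 1, 2, 10 and on that of channel 2 at 0, -10, 2, 1.
   With query 0, point 2 is eliminated by point 1 (channel 1) resp. by point 3
   (channel 2), each of which lies between 0 and 2 there; but each eliminator is far
   away in the other channel, so no triangle with vertex 1 or 3 is obtuse in the
   aggregate space and point 2 becomes an aggregate NNK neighbour. *)

lemma sqdist_nonneg: "0 \<le> sqdist D u v"
  by (simp add: sqdist_def sum_nonneg)

lemma sqdist_concat_data:
  "sqdist (D1 + D2) (concat_data D1 x1 x2 a) (concat_data D1 x1 x2 b) =
     sqdist D1 (x1 a) (x1 b) + sqdist D2 (x2 a) (x2 b)"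
  by (induction D2) (simp_all add: sqdist_def concat_data_def)

lemma gkernel_eq_exp_sqdist:
  "gkernel \<sigma> D x a b = exp (- sqdist D (x a) (x b) / (2 * \<sigma>\<^sup>2))"
  by (simp add: gkernel_def edist_def sqdist_nonneg)

lemma gkernel_mult:
  "gkernel \<sigma> D x a b * gkernel \<sigma> D x c d =
     exp (- (sqdist D (x a) (x b) + sqdist D (x c) (x d)) / (2 * \<sigma>\<^sup>2))"
  by (simp add: gkernel_eq_exp_sqdist exp_add[symmetric] add_divide_distrib diff_divide_distrib)

lemma exp_neg_divide_less_iff:
  fixes s t c :: real
  assumes "c \<noteq> 0"
  shows "exp (- s / (2 * c\<^sup>2)) < exp (- t / (2 * c\<^sup>2)) \<longleftrightarrow> t < s"
proof -
  have "0 < 2 * c\<^sup>2"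
    using assms by simp
  then show ?thesis
    by (simp add: divide_less_cancel)
qed

lemma gkernel_less_mult_iff:
  assumes "\<sigma> \<noteq> 0"
  shows "gkernel \<sigma> D x a b < gkernel \<sigma> D x c d * gkernel \<sigma> D x e f \<longleftrightarrow>
           sqdist D (x c) (x d) + sqdist D (x e) (x f) < sqdist D (x a) (x b)"
  unfolding gkernel_mult unfolding gkernel_eq_exp_sqdist exp_neg_divide_less_iff[OF assms] ..

lemma gkernel_mult_less_iff:
  assumes "\<sigma> \<noteq> 0"
  shows "gkernel \<sigma> D x c d * gkernel \<sigma> D x e f < gkernel \<sigma> D x a b \<longleftrightarrow>
           sqdist D (x a) (x b) < sqdist D (x c) (x d) + sqdist D (x e) (x f)"
  unfolding gkernel_mult unfolding gkernel_eq_exp_sqdist exp_neg_divide_less_iff[OF assms] ..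

lemma mem_nnk_gkernel_iff:
  assumes "\<sigma> \<noteq> 0"
  shows "k \<in> nnk (gkernel \<sigma> D x) i S \<longleftrightarrow>
           k \<in> S \<and>
           (\<forall>m\<in>S - {k}. sqdist D (x i) (x k) < sqdist D (x i) (x m) + sqdist D (x k) (x m))"
  using gkernel_mult_less_iff[OF assms] by (simp add: nnk_def)

lemma knn_cand_iff_sqdist:
  "knn_cand N D x K i S \<longleftrightarrow>
     S \<subseteq> {..<N} - {i} \<and> card S = K \<and>
     (\<forall>l\<in>S. \<forall>m\<in>{..<N} - (S \<union> {i}). sqdist D (x i) (x l) \<le> sqdist D (x i) (x m))"
  by (simp add: knn_cand_def edist_def)

definition example_chan1 :: "nat \<Rightarrow> nat \<Rightarrow> real" where
  "example_chan1 a t = [0, 1, 2, 10] ! a"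

definition example_chan2 :: "nat \<Rightarrow> nat \<Rightarrow> real" where
  "example_chan2 a t = [0, -10, 2, 1] ! a"

lemma lessThan_four: "{..<4::nat} = {0, 1, 2, 3}"
  by auto

theorem lemma1:
  shows "\<exists>(D1::nat) (D2::nat) (N::nat) (x1::nat \<Rightarrow> nat \<Rightarrow> real) (x2::nat \<Rightarrow> nat \<Rightarrow> real)
           (\<sigma>::real) (i::nat) (K::nat) (S1::nat set) (S2::nat set) (j::nat) (k::nat).
     D1 \<ge> 1 \<and> D2 \<ge> 1 \<and> \<sigma> > 0 \<and> i < N \<and>
     knn_cand N D1 x1 K i S1 \<and> knn_cand N D2 x2 K i S2 \<and>
     j \<in> S1 \<union> S2 \<and> k \<in> S1 \<union> S2 \<and> j \<noteq> k \<and>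
     k \<notin> nnk (gkernel \<sigma> D1 x1) i S1 \<and> k \<notin> nnk (gkernel \<sigma> D2 x2) i S2 \<and>
     gkernel \<sigma> D1 x1 i k < gkernel \<sigma> D1 x1 i j * gkernel \<sigma> D1 x1 j k \<and>
     gkernel \<sigma> D2 x2 i k > gkernel \<sigma> D2 x2 i j * gkernel \<sigma> D2 x2 j k \<and>
     k \<in> nnk (gkernel \<sigma> (D1 + D2) (concat_data D1 x1 x2)) i (S1 \<union> S2)"
proof -
  have knn1: "knn_cand 4 1 example_chan1 2 0 {1, 2}"
    by (auto simp: knn_cand_iff_sqdist lessThan_four sqdist_def example_chan1_def)
  have knn2: "knn_cand 4 1 example_chan2 2 0 {2, 3}"
    by (auto simp: knn_cand_iff_sqdist lessThan_four sqdist_def example_chan2_def)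
  have not_nnk1: "2 \<notin> nnk (gkernel 1 1 example_chan1) 0 {1, 2}"
    by (simp add: mem_nnk_gkernel_iff insert_Diff_if sqdist_def example_chan1_def)
  have not_nnk2: "2 \<notin> nnk (gkernel 1 1 example_chan2) 0 {2, 3}"
    by (simp add: mem_nnk_gkernel_iff insert_Diff_if sqdist_def example_chan2_def)
  have elim1:
    "gkernel 1 1 example_chan1 0 2 < gkernel 1 1 example_chan1 0 1 * gkernel 1 1 example_chan1 1 2"
    by (simp add: gkernel_less_mult_iff sqdist_def example_chan1_def)
  have no_elim2:
    "gkernel 1 1 example_chan2 0 1 * gkernel 1 1 example_chan2 1 2 < gkernel 1 1 example_chan2 0 2"
    by (simp add: gkernel_mult_less_iff sqdist_def example_chan2_def)
  have nnk_aggregate: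
    "2 \<in> nnk (gkernel 1 (1 + 1) (concat_data 1 example_chan1 example_chan2)) 0 ({1, 2} \<union> {2, 3})"
    unfolding mem_nnk_gkernel_iff[OF one_neq_zero] sqdist_concat_data
    by (simp add: insert_Diff_if sqdist_def example_chan1_def example_chan2_def)
  show ?thesis
    using knn1 knn2 not_nnk1 not_nnk2 elim1 no_elim2 nnk_aggregate
    by - (rule exI[of _ 1], rule exI[of _ 1], rule exI[of _ 4], rule exI[of _ example_chan1],
        rule exI[of _ example_chan2], rule exI[of _ 1], rule exI[of _ 0], rule exI[of _ 2],
        rule exI[of _ "{1, 2}"], rule exI[of _ "{2, 3}"], rule exI[of _ 1], rule exI[of _ 2], simp)
qed

end
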